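(* Let $k,d$ be positive integers with $d\equiv0\pmod k$. There exists $n_0=n_0(d,k)$ such that for every $n\ge n_0$, $p(n,k,d)=\binom{n}{\le d/k}$. Moreover, for such $n$ the only $k$-wise $(n-d)$-union family $\mathcal{F}\subset2^{[n]}$ of size $\binom{n}{\le d/k}$ is $\binom{[n]}{\le d/k}$.
   Context: $[n]=\{1,\dots,n\}$. $\binom{[n]}{\le t}=\{S\subset[n]:|S|\le t\}$ and $\binom{n}{\le t}$ is its size. A family $\mathcal{F}\subset2^{[n]}$ is $k$-wise $(n-d)$-union if $|S_1\cup\cdots\cup S_k|\le d$ for all (not necessarily distinct) $S_1,\dots,S_k\in\mathcal{F}$. $p(n,k,d)$ is the maximum size of a $k$-wise $(n-d)$-union family $\mathcal{F}\subset2^{[n]}$. *)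

theory Defs
  imports Main
begin

definition subsets_le :: "nat \<Rightarrow> nat \<Rightarrow> nat set set" where
  "subsets_le n t = {S. S \<subseteq> {1..n} \<and> card S \<le> t}"

text \<open>F \<subseteq> 2^[n] is k-wise (n-d)-union: the union of any k (not necessarily
  distinct) members has size at most d.\<close>
definition kwise_union :: "nat \<Rightarrow> nat \<Rightarrow> nat \<Rightarrow> nat set set \<Rightarrow> bool" where
  "kwise_union n k d F \<longleftrightarrow> F \<subseteq> Pow {1..n} \<and>
     (\<forall>S :: nat \<Rightarrow> nat set. (\<forall>i<k. S i \<in> F) \<longrightarrow> card (\<Union>i<k. S i) \<le> d)"

definition p :: "nat \<Rightarrow> nat \<Rightarrow> nat \<Rightarrow> nat" where
  "p n k d = Max {card F | F. kwise_union n k d F}"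

end

theory Submission
  imports Defs "HOL.Binomial_Plus"
begin

text \<open>Write \<open>d = k t\<close>. The family of all sets of size at most \<open>t\<close> is \<open>k\<close>-wise \<open>(n - d)\<close>-union.
  Conversely, let \<open>F\<close> be such a family containing a set of size \<open>> t\<close>. Take the largest \<open>m < k\<close>
  such that some \<open>m\<close> members of \<open>F\<close> have a union \<open>U\<close> with \<open>|U| > m t\<close> (\<open>m = 1\<close> qualifies by the
  large set); by maximality \<open>F\<close> is \<open>(m+1)\<close>-wise \<open>(n - (m+1) t)\<close>-union, so \<open>|U| \<le> (m+1) t\<close>
  and every \<open>B \<in> F\<close> has \<open>|B - U| < t\<close>. Hence \<open>B \<mapsto> (B \<inter> U, B - U)\<close> shows
  \<open>|F| \<le> 2^d \<cdot> (n choose \<le> t-1)\<close>, which is \<open>o(n choose \<le> t)\<close>. So for large \<open>n\<close> every extremal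
  family consists of sets of size at most \<open>t\<close>, i.e. is \<open>([n] choose \<le> t)\<close> itself.\<close>

lemma finite_subsets_le: "finite (subsets_le n t)"
  unfolding subsets_le_def by (auto intro: finite_subset[of _ "Pow {1..n}"])

lemma card_subsets_le: "card (subsets_le n t) = (\<Sum>i\<le>t. n choose i)"
proof (induction t)
  case 0
  have "subsets_le n 0 = {{}}"
    by (auto simp: subsets_le_def card_eq_0_iff dest: finite_subset)
  then show ?case by simp
next
  case (Suc t)
  have split: "subsets_le n (Suc t) = subsets_le n t \<union> {S. S \<subseteq> {1..n} \<and> card S = Suc t}"
    by (auto simp: subsets_le_def)
  have "card (subsets_le n (Suc t))
      = card (subsets_le n t) + card {S. S \<subseteq> {1..n} \<and> card S = Suc t}"
    unfolding split
    by (rule card_Un_disjoint) (auto simp: subsets_le_def finite_subsets_le[unfolded subsets_le_def]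
        intro: finite_subset[of _ "Pow {1..n}"])
  also have "card {S. S \<subseteq> {1..n} \<and> card S = Suc t} = n choose Suc t"
    using n_subsets[of "{1..n}" "Suc t"] by simp
  finally show ?case using Suc by simp
qed

lemma binomial_le_card_subsets_le: "n choose t \<le> card (subsets_le n t)"
  unfolding card_subsets_le by (rule member_le_sum) auto

lemma card_subsets_le_pred_le: "t > 0 \<Longrightarrow> 2 * t \<le> n \<Longrightarrow>
    card (subsets_le n (t - 1)) \<le> t * (n choose (t - 1))"
proof -
  assume "t > 0" "2 * t \<le> n"
  then have "(\<Sum>i\<le>t-1. n choose i) \<le> (\<Sum>i\<le>t-1. n choose (t - 1))"
    by (intro sum_mono binomial_mono) auto
  with \<open>t > 0\<close> show ?thesis by (simp add: card_subsets_le)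
qed

lemma mult_card_subsets_le_pred_less:
  assumes "t > 0" and n: "t * t * M + 2 * t \<le> n"
  shows "M * card (subsets_le n (t - 1)) < card (subsets_le n t)"
proof -
  define c where "c = n choose (t - 1)"
  have "c > 0" using n by (simp add: c_def)
  have absorb: "t * (n choose t) = (n - (t - 1)) * c"
    using times_binomial_minus1_eq[of t n] binomial_absorb_comp[of n "t - 1"] \<open>t > 0\<close>
    by (simp add: c_def)
  have "t * (M * card (subsets_le n (t - 1))) \<le> t * t * M * c"
    using card_subsets_le_pred_le[OF \<open>t > 0\<close>, of n] n by (simp add: c_def)
  also have "\<dots> < (n - (t - 1)) * c"
  proof -
    have "t * t * M < n - (t - 1)" using n \<open>t > 0\<close> by linarith
    then show ?thesis using \<open>c > 0\<close> by simp
  qed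
  also have "\<dots> = t * (n choose t)" by (simp add: absorb)
  finally have "M * card (subsets_le n (t - 1)) < n choose t" by simp
  then show ?thesis using binomial_le_card_subsets_le le_trans not_le by blast
qed

lemma kwise_union_subsets_le: "kwise_union n k (k * t) (subsets_le n t)"
  unfolding kwise_union_def
proof (intro conjI allI impI)
  show "subsets_le n t \<subseteq> Pow {1..n}" by (auto simp: subsets_le_def)
  fix S :: "nat \<Rightarrow> nat set" assume S: "\<forall>i<k. S i \<in> subsets_le n t"
  have "card (\<Union>i<k. S i) \<le> (\<Sum>i<k. card (S i))" by (rule card_UN_le) simp
  also have "\<dots> \<le> (\<Sum>i<k. t)" using S by (intro sum_mono) (auto simp: subsets_le_def)
  finally show "card (\<Union>i<k. S i) \<le> k * t" by simp
qed

lemma kwise_union_Suc_extend: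
  assumes "kwise_union n (Suc m) d F" "\<forall>i<m. S i \<in> F" "B \<in> F"
  shows "card ((\<Union>i<m. S i) \<union> B) \<le> d"
proof -
  have "(\<Union>i<Suc m. (S(m := B)) i) = (\<Union>i<m. S i) \<union> B"
    by (auto simp: lessThan_Suc)
  moreover have "\<forall>i<Suc m. (S(m := B)) i \<in> F"
    using assms(2,3) by (auto simp: less_Suc_eq)
  ultimately show ?thesis using assms(1) unfolding kwise_union_def by metis
qed

lemma kwise_union_card_member_le:
  assumes "kwise_union n k d F" "k > 0" "A \<in> F"
  shows "card A \<le> d"
proof -
  have "(\<Union>i<k. (\<lambda>_. A) i) = A" using \<open>k > 0\<close> by auto
  with assms show ?thesis unfolding kwise_union_def by (metis (no_types, lifting))
qed

lemma card_family_le_small_outside: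
  assumes "F \<subseteq> Pow {1..n}" "finite U" "card U \<le> D"
    and outside: "\<And>B. B \<in> F \<Longrightarrow> card (B - U) \<le> s"
  shows "card F \<le> 2 ^ D * card (subsets_le n s)"
proof -
  have "inj_on (\<lambda>B. (B \<inter> U, B - U)) F"
    by (rule inj_onI) (metis Int_Diff_Un prod.inject)
  moreover have "(\<lambda>B. (B \<inter> U, B - U)) ` F \<subseteq> Pow U \<times> subsets_le n s"
    using assms(1) outside by (auto simp: subsets_le_def)
  moreover have "finite (Pow U \<times> subsets_le n s)"
    using \<open>finite U\<close> finite_subsets_le by simp
  ultimately have "card F \<le> card (Pow U \<times> subsets_le n s)" by (rule card_inj_on_le)
  also have "\<dots> = 2 ^ card U * card (subsets_le n s)"
    by (simp add: card_cartesian_product card_Pow \<open>finite U\<close>)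
  also have "\<dots> \<le> 2 ^ D * card (subsets_le n s)"
    using \<open>card U \<le> D\<close> by simp
  finally show ?thesis .
qed

lemma card_kwise_union_with_large_member:
  assumes "k > 0" "kwise_union n k (k * t) F" "A \<in> F" "card A > t"
  shows "card F \<le> 2 ^ (k * t) * card (subsets_le n (t - 1))"
  using assms
proof (induction k rule: nat_induct_non_zero)
  case 1
  then show ?case using kwise_union_card_member_le[of n 1 t F A] by simp
next
  case (Suc m)
  have F: "F \<subseteq> Pow {1..n}" using Suc.prems unfolding kwise_union_def by blast
  show ?case
  proof (cases "\<exists>S. (\<forall>i<m. S i \<in> F) \<and> card (\<Union>i<m. S i) > m * t")
    case False
    then have "kwise_union n m (m * t) F"
      using F unfolding kwise_union_def by (auto simp: not_less)
    then have "card F \<le> 2 ^ (m * t) * card (subsets_le n (t - 1))"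
      using Suc.IH Suc.prems by simp
    also have "\<dots> \<le> 2 ^ (Suc m * t) * card (subsets_le n (t - 1))"
      by simp
    finally show ?thesis .
  next
    case True
    then obtain S where S: "\<forall>i<m. S i \<in> F" and large: "card (\<Union>i<m. S i) > m * t" by blast
    define U where "U = (\<Union>i<m. S i)"
    have "U \<subseteq> {1..n}" using S F unfolding U_def by blast
    then have "finite U" by (rule finite_subset) simp
    have extend: "card (U \<union> B) \<le> Suc m * t" if "B \<in> F" for B
      using kwise_union_Suc_extend[OF Suc.prems(1) S that] by (simp add: U_def)
    have "finite A" using Suc.prems(2) F finite_subset by blast
    then have "card U \<le> card (U \<union> A)" using \<open>finite U\<close> by (simp add: card_mono)
    then have "card U \<le> Suc m * t" using extend[OF Suc.prems(2)] by simp
    moreover have "card (B - U) \<le> t - 1" if "B \<in> F" for B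
    proof -
      have "finite B" using that F finite_subset by blast
      then have "card (U \<union> B) = card U + card (B - U)"
        using card_Un_disjoint[of U "B - U"] \<open>finite U\<close> by (simp add: Un_Diff_cancel)
      then show ?thesis using extend[OF that] large by (simp add: U_def)
    qed
    ultimately show ?thesis
      using card_family_le_small_outside[OF F \<open>finite U\<close>] by blast
  qed
qed

lemma kwise_union_large_eq_subsets_le:
  assumes "k > 0" "t > 0" "t * t * 2 ^ (k * t) + 2 * t \<le> n"
    and F: "kwise_union n k (k * t) F" and large: "card (subsets_le n t) \<le> card F"
  shows "F = subsets_le n t"
proof -
  have "card A \<le> t" if "A \<in> F" for A
  proof (rule ccontr)
    assume "\<not> card A \<le> t"
    then have "card F \<le> 2 ^ (k * t) * card (subsets_le n (t - 1))"
      using card_kwise_union_with_large_member[OF \<open>k > 0\<close> F that] by simp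
    also have "\<dots> < card (subsets_le n t)"
      using mult_card_subsets_le_pred_less[OF \<open>t > 0\<close> assms(3)] .
    finally show False using large by simp
  qed
  then have "F \<subseteq> subsets_le n t"
    using F unfolding kwise_union_def subsets_le_def by auto
  then show ?thesis using card_subset_eq[OF finite_subsets_le] large card_mono[OF finite_subsets_le]
    by (metis le_antisym)
qed

lemma p_eq_card_subsets_le:
  assumes "k > 0" "t > 0" "t * t * 2 ^ (k * t) + 2 * t \<le> n"
  shows "p n k (k * t) = card (subsets_le n t)"
  unfolding p_def
proof (rule Max_eqI)
  have "card F \<le> card (subsets_le n t)" if "kwise_union n k (k * t) F" for F
    using kwise_union_large_eq_subsets_le[OF assms that] by fastforce
  then show "y \<le> card (subsets_le n t)" if "y \<in> {card F |F. kwise_union n k (k * t) F}" for y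
    using that by blast
  then show "finite {card F |F. kwise_union n k (k * t) F}"
    by (meson finite_atMost atMost_iff finite_subset subsetI)
  show "card (subsets_le n t) \<in> {card F |F. kwise_union n k (k * t) F}"
    using kwise_union_subsets_le by blast
qed

theorem proposition9:
  fixes k d :: nat
  assumes "k > 0" and "d > 0" and "k dvd d"
  shows "\<exists>n0. \<forall>n\<ge>n0.
           p n k d = card (subsets_le n (d div k)) \<and>
           (\<forall>F. kwise_union n k d F \<and> card F = card (subsets_le n (d div k))
                \<longrightarrow> F = subsets_le n (d div k))"
proof -
  define t where "t = d div k"
  have d: "d = k * t" using \<open>k dvd d\<close> by (simp add: t_def)
  then have "t > 0" using \<open>d > 0\<close> by simp
  show ?thesis
  proof (intro exI allI impI)
    fix n assume "t * t * 2 ^ (k * t) + 2 * t \<le> n"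
    then show "p n k d = card (subsets_le n (d div k)) \<and>
           (\<forall>F. kwise_union n k d F \<and> card F = card (subsets_le n (d div k))
                \<longrightarrow> F = subsets_le n (d div k))"
      using p_eq_card_subsets_le kwise_union_large_eq_subsets_le \<open>k > 0\<close> \<open>t > 0\<close>
      unfolding d t_def[symmetric] by simp
  qed
qed

end
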